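(* Let $E$ and $E^c=\partial\overline{\mathcal{G}}\setminus E$ be nonempty clopen subsets of $\partial\overline{\mathcal{G}}$. Let $f:\overline{\mathcal{G}}\to\mathbb{R}$ be harmonic with $f(x)=C\ge 0$ for $x\in E$ and $f(x)>C$ for $x\in E^c$. Let $\epsilon>0$ be such that $N_\epsilon(E)$ has finite volume. Let $t$ be a regular value of $f$ with $C<t<\min_{x\in E^c}f(x)$ and $\{x: f(x)\le t\}\subset N_\epsilon(E)$. Then every $x\in\mathcal{G}$ with $f(x)=t$ can be connected to $\partial\overline{\mathcal{G}}$ by a path $\gamma$ lying in the set $\{f\le t\}$, and $\gamma$ can be chosen to have a single limit point in $\partial\overline{\mathcal{G}}$.
   Context: $\mathcal{G}$ is a connected, locally finite metric graph with countable vertex set and countable edge set. Each edge has a positive length and is identified with an interval. $\mathcal{G}$ carries the geodesic distance $d$, and $\overline{\mathcal{G}}$ is its metric completion. A designated set of vertices, containing all vertices of degree $1$, forms the boundary vertices. $\mathcal{G}_{int}$ is $\mathcal{G}$ minus the boundary vertices, and $\partial\overline{\mathcal{G}}=\overline{\mathcal{G}}\setminus\mathcal{G}_{int}$. Standing assumptions: $\overline{\mathcal{G}}$ is compact and $\partial\overline{\mathcal{G}}$ is totally disconnected. Clopen means open and closed in $\partial\overline{\mathcal{G}}$. $N_\epsilon(E)$ is the union of open balls of radius $\epsilon$ about points of $E$, and its volume is the Lebesgue measure of its intersection with the edges. A function $f:\overline{\mathcal{G}}\to\mathbb{R}$ is harmonic if it is continuous, linear on each edge, and satisfies $\sum_{e\sim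 v}\partial_\nu f_e(v)=0$ at every interior vertex $v$, where $\partial_\nu f_e(v)$ is the derivative of $f_e$ at $v$ in the direction from $v$ into $e$. A point $x\in\mathcal{G}$ is a critical point of $f$ if $x$ is a vertex or $f'(x)=0$. A number $c$ is a critical value if $f^{-1}(c)$ contains a critical point. Values in the range of $f$ that are not critical values are regular values. A path may be finite (traversing finitely many edges) or infinite: $\gamma:[0,L)\to\mathcal{G}$ traversing an infinite sequence of successively adjacent edges with total length $L<\infty$. Its limit points are the limits in $\overline{\mathcal{G}}$ of $\gamma(s_k)$ as $s_k\to L$. *)

theory Defs
  imports "HOL-Analysis.Analysis"
begin

text \<open>Points of a metric graph: a vertex, or the point at distance s from the
  initial endpoint of edge e (meaningful for 0 < s < length e).\<close>
datatype ('v, 'e) gpt = GV 'v | GE 'e real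

record ('v, 'e) mgraph =
  verts  :: "'v set"
  edges  :: "'e set"
  ends   :: "'e \<Rightarrow> 'v \<times> 'v"
  elen   :: "'e \<Rightarrow> real"
  bverts :: "'v set"

definition gpos :: "('v, 'e) mgraph \<Rightarrow> 'e \<Rightarrow> real \<Rightarrow> ('v, 'e) gpt" where
  "gpos G e s = (if s = 0 then GV (fst (ends G e))
                 else if s = elen G e then GV (snd (ends G e)) else GE e s)"

definition gpts :: "('v, 'e) mgraph \<Rightarrow> ('v, 'e) gpt set" where
  "gpts G = GV ` verts G \<union> {GE e s | e s. e \<in> edges G \<and> 0 < s \<and> s < elen G e}"

definition gint :: "('v, 'e) mgraph \<Rightarrow> ('v, 'e) gpt set" where
  "gint G = gpts G - GV ` bverts G"

definition incident :: "('v, 'e) mgraph \<Rightarrow> 'v \<Rightarrow> 'e set" where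
  "incident G v = {e \<in> edges G. fst (ends G e) = v \<or> snd (ends G e) = v}"

text \<open>Degree (a loop counts twice).\<close>
definition degree :: "('v, 'e) mgraph \<Rightarrow> 'v \<Rightarrow> nat" where
  "degree G v = card {e \<in> edges G. fst (ends G e) = v} + card {e \<in> edges G. snd (ends G e) = v}"

text \<open>Finite chains of segments along edges: (e, a, b) runs along edge e from
  parameter a to parameter b. These are the finite paths; their length is
  the sum of the segment lengths.\<close>
definition chain_from_to :: "('v, 'e) mgraph \<Rightarrow> ('v, 'e) gpt \<Rightarrow> ('v, 'e) gpt
    \<Rightarrow> ('e \<times> real \<times> real) list \<Rightarrow> bool" where
  "chain_from_to G x y cs \<longleftrightarrow>
     (cs = [] \<and> x = y) \<or>
     (cs \<noteq> [] \<and>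
      (\<forall>(e, a, b) \<in> set cs. e \<in> edges G \<and> a \<in> {0..elen G e} \<and> b \<in> {0..elen G e}) \<and>
      (case hd cs of (e, a, b) \<Rightarrow> gpos G e a = x) \<and>
      (case last cs of (e, a, b) \<Rightarrow> gpos G e b = y) \<and>
      (\<forall>i. Suc i < length cs \<longrightarrow>
         (case cs ! i of (e, a, b) \<Rightarrow> gpos G e b) =
         (case cs ! Suc i of (e, a, b) \<Rightarrow> gpos G e a)))"

definition chain_len :: "('e \<times> real \<times> real) list \<Rightarrow> real" where
  "chain_len cs = (\<Sum>(e, a, b) \<leftarrow> cs. \<bar>b - a\<bar>)"

definition gdist :: "('v, 'e) mgraph \<Rightarrow> ('v, 'e) gpt \<Rightarrow> ('v, 'e) gpt \<Rightarrow> real" where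
  "gdist G x y = Inf {chain_len cs | cs. chain_from_to G x y cs}"

definition metric_graph :: "('v, 'e) mgraph \<Rightarrow> bool" where
  "metric_graph G \<longleftrightarrow>
     countable (verts G) \<and> countable (edges G) \<and>
     (\<forall>e \<in> edges G. fst (ends G e) \<in> verts G \<and> snd (ends G e) \<in> verts G \<and> 0 < elen G e) \<and>
     (\<forall>v \<in> verts G. finite (incident G v)) \<and>
     (\<forall>x \<in> gpts G. \<forall>y \<in> gpts G. \<exists>cs. chain_from_to G x y cs) \<and>
     bverts G \<subseteq> verts G \<and>
     {v \<in> verts G. degree G v = 1} \<subseteq> bverts G"

text \<open>Metric completion, up to isometry: an isometric embedding \<iota> of the graph
  (with geodesic distance) into a metric space, with M the closure of the
  image and M complete.\<close>
definition is_completion :: "('v, 'e) mgraph \<Rightarrow> (('v, 'e) gpt \<Rightarrow> 'm::metric_space) \<Rightarrow> 'm set \<Rightarrow> bool" where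
  "is_completion G \<iota> M \<longleftrightarrow>
     (\<forall>x \<in> gpts G. \<forall>y \<in> gpts G. dist (\<iota> x) (\<iota> y) = gdist G x y) \<and>
     M = closure (\<iota> ` gpts G) \<and> complete M"

definition bdry :: "('v, 'e) mgraph \<Rightarrow> (('v, 'e) gpt \<Rightarrow> 'm::metric_space) \<Rightarrow> 'm set \<Rightarrow> 'm set" where
  "bdry G \<iota> M = M - \<iota> ` gint G"

definition totally_disconnected :: "'a::topological_space set \<Rightarrow> bool" where
  "totally_disconnected S \<longleftrightarrow> (\<forall>T. T \<subseteq> S \<and> connected T \<longrightarrow> (\<exists>a. T \<subseteq> {a}))"

definition clopen_in :: "'a::topological_space set \<Rightarrow> 'a set \<Rightarrow> bool" where
  "clopen_in S A \<longleftrightarrow> openin (top_of_set S) A \<and> closedin (top_of_set S) A"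

definition outward_deriv :: "('v, 'e) mgraph \<Rightarrow> (('v, 'e) gpt \<Rightarrow> 'm) \<Rightarrow> ('m \<Rightarrow> real)
    \<Rightarrow> 'v \<Rightarrow> 'e \<Rightarrow> real" where
  "outward_deriv G \<iota> f v e =
     (let sl = (f (\<iota> (gpos G e (elen G e))) - f (\<iota> (gpos G e 0))) / elen G e in
      (if fst (ends G e) = v then sl else 0) + (if snd (ends G e) = v then - sl else 0))"

definition harmonic :: "('v, 'e) mgraph \<Rightarrow> (('v, 'e) gpt \<Rightarrow> 'm::metric_space) \<Rightarrow> 'm set
    \<Rightarrow> ('m \<Rightarrow> real) \<Rightarrow> bool" where
  "harmonic G \<iota> M f \<longleftrightarrow>
     continuous_on M f \<and>
     (\<forall>e \<in> edges G. \<exists>a b. \<forall>s \<in> {0..elen G e}. f (\<iota> (gpos G e s)) = a + b * s) \<and>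
     (\<forall>v \<in> verts G - bverts G. (\<Sum>e \<in> incident G v. outward_deriv G \<iota> f v e) = 0)"

definition critical_point :: "('v, 'e) mgraph \<Rightarrow> (('v, 'e) gpt \<Rightarrow> 'm) \<Rightarrow> ('m \<Rightarrow> real)
    \<Rightarrow> ('v, 'e) gpt \<Rightarrow> bool" where
  "critical_point G \<iota> f x \<longleftrightarrow> x \<in> gpts G \<and>
     (x \<in> GV ` verts G \<or>
      (\<exists>e s. x = GE e s \<and> ((\<lambda>r. f (\<iota> (gpos G e r))) has_real_derivative 0) (at s)))"

definition critical_value :: "('v, 'e) mgraph \<Rightarrow> (('v, 'e) gpt \<Rightarrow> 'm) \<Rightarrow> ('m \<Rightarrow> real)
    \<Rightarrow> real \<Rightarrow> bool" where
  "critical_value G \<iota> f c \<longleftrightarrow> (\<exists>x. critical_point G \<iota> f x \<and> f (\<iota> x) = c)"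

definition regular_value :: "('v, 'e) mgraph \<Rightarrow> (('v, 'e) gpt \<Rightarrow> 'm) \<Rightarrow> 'm set
    \<Rightarrow> ('m \<Rightarrow> real) \<Rightarrow> real \<Rightarrow> bool" where
  "regular_value G \<iota> M f t \<longleftrightarrow> t \<in> f ` M \<and> \<not> critical_value G \<iota> f t"

definition nbhd :: "'m::metric_space set \<Rightarrow> 'm set \<Rightarrow> real \<Rightarrow> 'm set" where
  "nbhd M E \<epsilon> = M \<inter> (\<Union>x \<in> E. ball x \<epsilon>)"

definition volume :: "('v, 'e) mgraph \<Rightarrow> (('v, 'e) gpt \<Rightarrow> 'm) \<Rightarrow> 'm set \<Rightarrow> ennreal" where
  "volume G \<iota> S = (\<integral>\<^sup>+ e. emeasure lborel {s \<in> {0<..<elen G e}. \<iota> (GE e s) \<in> S} \<partial>count_space (edges G))"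

text \<open>A (finite or infinite) path, parametrised by (at most) arc length:
  \<gamma> : [0,L) \<rightarrow> graph, 1-Lipschitz for the geodesic distance. Its total length
  is at most L < \<infinity>. A finite path ending at a point of the graph is the
  case where the limit at L is that endpoint.\<close>
definition graph_path :: "('v, 'e) mgraph \<Rightarrow> (real \<Rightarrow> ('v, 'e) gpt) \<Rightarrow> real \<Rightarrow> bool" where
  "graph_path G \<gamma> L \<longleftrightarrow> 0 < L \<and>
     (\<forall>s \<in> {0..<L}. \<gamma> s \<in> gpts G) \<and>
     (\<forall>s \<in> {0..<L}. \<forall>s' \<in> {0..<L}. gdist G (\<gamma> s) (\<gamma> s') \<le> \<bar>s - s'\<bar>)"

end

theory Submission
  imports Defs
begin

text \<open>
  Since t is a regular value, a point x with f x = t lies inside an edge on which f is not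
  constant. From x walk down that edge to its lower end and keep descending: at an interior vertex
  reached along an ascending edge, harmonicity (the outgoing slopes sum to zero) provides a
  descending edge. The vertex values strictly decrease, so no edge is used twice, and every edge
  used lies in \<open>{f \<le> t} \<subseteq> N\<^sub>\<epsilon>(E)\<close>, so finite volume bounds the total length. Hence the path
  converges in the complete space M, and its limit is not an interior point because, by local
  finiteness, every point of the graph keeps a positive distance from all other vertices.
  Compactness, total disconnectedness, the clopen partition and the boundary values of f are
  not needed.
\<close>


lemma metric_graph_elen_pos: "metric_graph G \<Longrightarrow> e \<in> edges G \<Longrightarrow> 0 < elen G e"
  by (simp add: metric_graph_def)

lemma gpos_at_0 [simp]: "gpos G e 0 = GV (fst (ends G e))"
  by (simp add: gpos_def)

lemma gpos_at_elen [simp]: "elen G e \<noteq> 0 \<Longrightarrow> gpos G e (elen G e) = GV (snd (ends G e))"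
  by (simp add: gpos_def)

lemma gpos_interior: "0 < s \<Longrightarrow> s < elen G e \<Longrightarrow> gpos G e s = GE e s"
  by (simp add: gpos_def)

lemma gpos_gpts: "metric_graph G \<Longrightarrow> e \<in> edges G \<Longrightarrow> s \<in> {0..elen G e} \<Longrightarrow> gpos G e s \<in> gpts G"
  unfolding metric_graph_def gpos_def gpts_def by auto

lemma completion_dist:
  "is_completion G \<iota> M \<Longrightarrow> x \<in> gpts G \<Longrightarrow> y \<in> gpts G \<Longrightarrow> dist (\<iota> x) (\<iota> y) = gdist G x y"
  by (simp add: is_completion_def)

lemma completion_mem: "is_completion G \<iota> M \<Longrightarrow> x \<in> gpts G \<Longrightarrow> \<iota> x \<in> M"
  unfolding is_completion_def using closure_subset by blast

lemma chain_from_to_Nil [simp]: "chain_from_to G x y [] \<longleftrightarrow> x = y"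
  by (simp add: chain_from_to_def)

lemma chain_from_to_Cons:
  "chain_from_to G x y ((e, a, b) # cs) \<longleftrightarrow>
     e \<in> edges G \<and> a \<in> {0..elen G e} \<and> b \<in> {0..elen G e} \<and> gpos G e a = x \<and>
     (if cs = [] then gpos G e b = y else chain_from_to G (gpos G e b) y cs)"
proof (cases cs)
  case Nil
  then show ?thesis by (auto simp: chain_from_to_def)
next
  case (Cons c cs')
  have links: "(\<forall>i. Suc i < length ((e, a, b) # cs) \<longrightarrow>
      (case ((e, a, b) # cs) ! i of (e, a, b) \<Rightarrow> gpos G e b) =
      (case ((e, a, b) # cs) ! Suc i of (e, a, b) \<Rightarrow> gpos G e a)) \<longleftrightarrow>
    gpos G e b = (case c of (e, a, b) \<Rightarrow> gpos G e a) \<and>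
    (\<forall>i. Suc i < length cs \<longrightarrow>
      (case cs ! i of (e, a, b) \<Rightarrow> gpos G e b) = (case cs ! Suc i of (e, a, b) \<Rightarrow> gpos G e a))"
    using Cons by (auto simp: All_less_Suc2 simp del: nth_Cons_Suc)
  show ?thesis
    unfolding chain_from_to_def links using Cons by (auto split: prod.splits)
qed

lemma chain_from_to_append:
  "chain_from_to G x y cs \<Longrightarrow> chain_from_to G y z ds \<Longrightarrow> chain_from_to G x z (cs @ ds)"
proof (induction cs arbitrary: x)
  case Nil
  then show ?case by simp
next
  case (Cons c cs)
  obtain e a b where c: "c = (e, a, b)" by (cases c)
  show ?case
  proof (cases "cs = []")
    case True
    then show ?thesis
      using Cons.prems by (cases ds) (auto simp: c chain_from_to_Cons)
  next
    case False
    then show ?thesis using Cons by (auto simp: c chain_from_to_Cons)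
  qed
qed

lemma chain_len_append: "chain_len (cs @ ds) = chain_len cs + chain_len ds"
  by (simp add: chain_len_def)

lemma chain_len_nonneg: "0 \<le> chain_len cs"
  unfolding chain_len_def by (induction cs) auto

lemma gdist_le_chain_len: "chain_from_to G x y cs \<Longrightarrow> gdist G x y \<le> chain_len cs"
  unfolding gdist_def by (rule cInf_lower) (auto intro: bdd_belowI[where m = 0] chain_len_nonneg)

lemma gdist_greatest:
  "chain_from_to G x y cs \<Longrightarrow> (\<And>cs. chain_from_to G x y cs \<Longrightarrow> c \<le> chain_len cs) \<Longrightarrow> c \<le> gdist G x y"
  unfolding gdist_def by (rule cInf_greatest) auto

lemma metric_graph_chain_exists:
  "metric_graph G \<Longrightarrow> x \<in> gpts G \<Longrightarrow> y \<in> gpts G \<Longrightarrow> \<exists>cs. chain_from_to G x y cs"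
  unfolding metric_graph_def by blast

lemma gdist_triangle:
  assumes "metric_graph G" "x \<in> gpts G" "y \<in> gpts G" "z \<in> gpts G"
  shows "gdist G x z \<le> gdist G x y + gdist G y z"
proof -
  obtain cs where cs: "chain_from_to G x y cs" using metric_graph_chain_exists assms by blast
  obtain ds where ds: "chain_from_to G y z ds" using metric_graph_chain_exists assms by blast
  have "gdist G x z - chain_len ds' \<le> gdist G x y" if ds': "chain_from_to G y z ds'" for ds'
  proof (rule gdist_greatest[OF cs])
    fix cs' assume "chain_from_to G x y cs'"
    then have "gdist G x z \<le> chain_len (cs' @ ds')"
      using chain_from_to_append ds' gdist_le_chain_len by blast
    then show "gdist G x z - chain_len ds' \<le> chain_len cs'" by (simp add: chain_len_append)
  qed
  then have "gdist G x z - gdist G x y \<le> gdist G y z"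
    by (intro gdist_greatest[OF ds]) force
  then show ?thesis by simp
qed

lemma abs_diff_le_gdist:
  assumes "metric_graph G" "x \<in> gpts G" "y \<in> gpts G"
    and lip: "\<And>e a b. e \<in> edges G \<Longrightarrow> a \<in> {0..elen G e} \<Longrightarrow> b \<in> {0..elen G e} \<Longrightarrow>
      \<bar>h (gpos G e a) - h (gpos G e b)\<bar> \<le> \<bar>a - b\<bar>"
  shows "\<bar>h x - h y\<bar> \<le> gdist G x y"
proof -
  have "\<bar>h x - h y\<bar> \<le> chain_len cs" if "chain_from_to G x y cs" for cs
    using that
  proof (induction cs arbitrary: x)
    case Nil
    then show ?case by (simp add: chain_len_def)
  next
    case (Cons c cs)
    obtain e a b where c: "c = (e, a, b)" by (cases c)
    have seg: "\<bar>h x - h (gpos G e b)\<bar> \<le> \<bar>b - a\<bar>"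
      using Cons.prems lip[of e a b] by (simp add: c chain_from_to_Cons abs_minus_commute)
    show ?case
    proof (cases "cs = []")
      case True
      then show ?thesis using Cons.prems seg by (simp add: c chain_from_to_Cons chain_len_def)
    next
      case False
      then have "\<bar>h (gpos G e b) - h y\<bar> \<le> chain_len cs"
        using Cons by (simp add: c chain_from_to_Cons)
      then show ?thesis using seg by (simp add: c chain_len_def)
    qed
  qed
  moreover obtain cs where "chain_from_to G x y cs" using metric_graph_chain_exists assms by blast
  ultimately show ?thesis using gdist_greatest by blast
qed

lemma chain_from_to_rev:
  "chain_from_to G x y cs \<Longrightarrow> chain_from_to G y x (rev (map (\<lambda>(e, a, b). (e, b, a)) cs))"
proof (induction cs arbitrary: x)
  case Nil
  then show ?case by simp
next
  case (Cons c cs)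
  obtain e a b where c: "c = (e, a, b)" by (cases c)
  have flipped: "chain_from_to G (gpos G e b) x [(e, b, a)]"
    using Cons.prems by (simp add: c chain_from_to_Cons)
  show ?case
  proof (cases "cs = []")
    case True
    then show ?thesis using Cons.prems flipped by (simp add: c chain_from_to_Cons)
  next
    case False
    then have "chain_from_to G (gpos G e b) y cs" using Cons.prems by (simp add: c chain_from_to_Cons)
    then show ?thesis using chain_from_to_append[OF Cons.IH flipped] by (simp add: c)
  qed
qed

lemma chain_len_rev: "chain_len (rev (map (\<lambda>(e, a, b). (e, b, a)) cs)) = chain_len cs"
  by (induction cs) (auto simp: chain_len_def abs_minus_commute)

lemma gdist_commute: "gdist G x y = gdist G y x"
proof -
  have sub: "{chain_len cs | cs. chain_from_to G x y cs} \<subseteq> {chain_len cs | cs. chain_from_to G y x cs}"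
    for x y
  proof
    fix l assume "l \<in> {chain_len cs | cs. chain_from_to G x y cs}"
    then obtain cs where "l = chain_len cs" "chain_from_to G x y cs" by blast
    then have "l = chain_len (rev (map (\<lambda>(e, a, b). (e, b, a)) cs))"
      "chain_from_to G y x (rev (map (\<lambda>(e, a, b). (e, b, a)) cs))"
      by (simp_all add: chain_from_to_rev chain_len_rev)
    then show "l \<in> {chain_len cs | cs. chain_from_to G y x cs}" by blast
  qed
  then have "{chain_len cs | cs. chain_from_to G x y cs} = {chain_len cs | cs. chain_from_to G y x cs}"
    by (intro subset_antisym sub)
  then show ?thesis unfolding gdist_def by simp
qed

fun is_edge_seg :: "('v, 'e) mgraph \<Rightarrow> 'e \<times> real \<times> real \<Rightarrow> bool" where
  "is_edge_seg G (e, a, b) \<longleftrightarrow> e \<in> edges G \<and> a \<in> {0..elen G e} \<and> b \<in> {0..elen G e}"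

fun seg_start :: "('v, 'e) mgraph \<Rightarrow> 'e \<times> real \<times> real \<Rightarrow> ('v, 'e) gpt" where
  "seg_start G (e, a, b) = gpos G e a"

fun seg_end :: "('v, 'e) mgraph \<Rightarrow> 'e \<times> real \<times> real \<Rightarrow> ('v, 'e) gpt" where
  "seg_end G (e, a, b) = gpos G e b"

fun seg_len :: "'e \<times> real \<times> real \<Rightarrow> real" where
  "seg_len (e, a, b) = \<bar>b - a\<bar>"

fun seg_point :: "('v, 'e) mgraph \<Rightarrow> 'e \<times> real \<times> real \<Rightarrow> real \<Rightarrow> ('v, 'e) gpt" where
  "seg_point G (e, a, b) r = gpos G e (a + sgn (b - a) * r)"

fun sub_seg :: "'e \<times> real \<times> real \<Rightarrow> real \<Rightarrow> real \<Rightarrow> 'e \<times> real \<times> real" where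
  "sub_seg (e, a, b) r r' = (e, a + sgn (b - a) * r, a + sgn (b - a) * r')"

lemma seg_len_nonneg: "0 \<le> seg_len s"
  by (cases s) auto

lemma chain_len_Cons: "chain_len (s # cs) = seg_len s + chain_len cs"
  by (cases s) (simp add: chain_len_def)

lemma chain_len_map_upt: "chain_len (map c [m..<n]) = (\<Sum>j\<in>{m..<n}. seg_len (c j))"
  by (induction n) (auto simp: chain_len_def chain_len_append sum_list_map_eq_sum_count
    split: prod.splits)

lemma sgn_param_between:
  fixes a b r :: real
  assumes "r \<in> {0..\<bar>b - a\<bar>}"
  shows "min a b \<le> a + sgn (b - a) * r \<and> a + sgn (b - a) * r \<le> max a b"
  using assms by (cases "a < b"; cases "a = b") (auto simp: sgn_if)

lemma sgn_param_mem:
  fixes a b r l :: real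
  assumes "a \<in> {0..l}" "b \<in> {0..l}" "r \<in> {0..\<bar>b - a\<bar>}"
  shows "a + sgn (b - a) * r \<in> {0..l}"
  using sgn_param_between[OF assms(3)] assms(1,2) by auto

lemma seg_point_0 [simp]: "seg_point G s 0 = seg_start G s"
  by (cases s) simp

lemma seg_point_len [simp]: "seg_point G s (seg_len s) = seg_end G s"
  by (cases s) (simp add: sgn_mult_abs)

lemma seg_len_sub_seg: "seg_len (sub_seg s r r') \<le> \<bar>r' - r\<bar>"
proof (cases s)
  case (fields e a b)
  have "\<bar>sgn (b - a) * (r' - r)\<bar> \<le> \<bar>r' - r\<bar>"
    by (simp add: abs_mult abs_sgn_eq mult_le_cancel_right1)
  then show ?thesis by (simp add: fields algebra_simps)
qed

lemma chain_from_to_sub_seg: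
  assumes "is_edge_seg G s" "r \<in> {0..seg_len s}" "r' \<in> {0..seg_len s}"
  shows "chain_from_to G (seg_point G s r) (seg_point G s r') [sub_seg s r r']"
proof (cases s)
  case (fields e a b)
  then show ?thesis
    using assms sgn_param_mem[of a "elen G e" b r] sgn_param_mem[of a "elen G e" b r']
    by (simp add: chain_from_to_Cons)
qed

lemma chain_from_to_seg:
  "is_edge_seg G s \<Longrightarrow> chain_from_to G (seg_start G s) (seg_end G s) [s]"
  by (cases s) (simp add: chain_from_to_Cons)

lemma gdist_seg_point:
  assumes "is_edge_seg G s" "r \<in> {0..seg_len s}" "r' \<in> {0..seg_len s}"
  shows "gdist G (seg_point G s r) (seg_point G s r') \<le> \<bar>r - r'\<bar>"
  using gdist_le_chain_len[OF chain_from_to_sub_seg[OF assms]] seg_len_sub_seg[of s r r']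
  by (simp add: chain_len_def abs_minus_commute split: prod.splits)

lemma seg_point_gpts:
  assumes "metric_graph G" "is_edge_seg G s" "r \<in> {0..seg_len s}"
  shows "seg_point G s r \<in> gpts G"
proof (cases s)
  case (fields e a b)
  then show ?thesis
    using assms sgn_param_mem[of a "elen G e" b r] by (simp add: gpos_gpts)
qed

definition other_end :: "('v, 'e) mgraph \<Rightarrow> 'v \<Rightarrow> 'e \<Rightarrow> 'v" where
  "other_end G v e = (if fst (ends G e) = v then snd (ends G e) else fst (ends G e))"

definition end_param :: "('v, 'e) mgraph \<Rightarrow> 'e \<Rightarrow> 'v \<Rightarrow> real" where
  "end_param G e v = (if fst (ends G e) = v then 0 else elen G e)"

lemma incident_other_end: "e \<in> incident G v \<Longrightarrow> e \<in> incident G (other_end G v e)"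
  by (auto simp: incident_def other_end_def)

lemma other_end_other_end: "e \<in> incident G v \<Longrightarrow> other_end G (other_end G v e) e = v"
  by (auto simp: incident_def other_end_def)

lemma other_end_verts: "metric_graph G \<Longrightarrow> e \<in> incident G v \<Longrightarrow> other_end G v e \<in> verts G"
  by (auto simp: metric_graph_def incident_def other_end_def)

lemma ends_eq_other_end:
  "e \<in> incident G v \<Longrightarrow> {fst (ends G e), snd (ends G e)} = {v, other_end G v e}"
  by (auto simp: incident_def other_end_def)

lemma end_param_mem: "metric_graph G \<Longrightarrow> e \<in> edges G \<Longrightarrow> end_param G e v \<in> {0..elen G e}"
  using metric_graph_elen_pos[of G e] by (simp add: end_param_def)

lemma gpos_end_param: "metric_graph G \<Longrightarrow> e \<in> incident G v \<Longrightarrow> gpos G e (end_param G e v) = GV v"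
  using metric_graph_elen_pos[of G e] by (auto simp: incident_def end_param_def)

lemma end_param_other_end_diff:
  assumes "metric_graph G" "e \<in> incident G v" "other_end G v e \<noteq> v"
  shows "\<bar>end_param G e (other_end G v e) - end_param G e v\<bar> = elen G e"
  using assms metric_graph_elen_pos[of G e]
  by (auto simp: incident_def other_end_def end_param_def)

section \<open>Paths along infinite chains of segments\<close>

locale segment_chain =
  fixes G :: "('v, 'e) mgraph" and \<iota> :: "('v, 'e) gpt \<Rightarrow> 'm::metric_space" and M :: "'m set"
    and c :: "nat \<Rightarrow> 'e \<times> real \<times> real"
  assumes graph: "metric_graph G" and compl: "is_completion G \<iota> M"
    and edge_seg: "\<And>n. is_edge_seg G (c n)"
    and linked: "\<And>n. seg_end G (c n) = seg_start G (c (Suc n))"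
    and summable_len: "summable (\<lambda>n. seg_len (c n))"
    and first_len_pos: "0 < seg_len (c 0)"
begin

definition offset :: "nat \<Rightarrow> real" where
  "offset n = (\<Sum>j<n. seg_len (c j))"

definition total_len :: real where
  "total_len = (\<Sum>n. seg_len (c n))"

text \<open>The strict inequality makes \<open>seg_index\<close> skip segments of length zero.\<close>

definition seg_index :: "real \<Rightarrow> nat" where
  "seg_index s = (LEAST n. s < offset (Suc n))"

definition chain_path :: "real \<Rightarrow> ('v, 'e) gpt" where
  "chain_path s = seg_point G (c (seg_index s)) (s - offset (seg_index s))"

definition chain_limit :: 'm where
  "chain_limit = lim (\<lambda>n. \<iota> (seg_start G (c n)))"

lemma offset_0 [simp]: "offset 0 = 0"
  by (simp add: offset_def)

lemma offset_Suc: "offset (Suc n) = offset n + seg_len (c n)"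
  by (simp add: offset_def)

lemma offset_mono: "m \<le> n \<Longrightarrow> offset m \<le> offset n"
  unfolding offset_def by (rule sum_mono2) (auto simp: seg_len_nonneg)

lemma offset_tendsto: "offset \<longlonglongrightarrow> total_len"
  unfolding offset_def total_len_def using summable_LIMSEQ[OF summable_len] .

lemma offset_le_total_len: "offset n \<le> total_len"
  unfolding offset_def total_len_def
  by (intro sum_le_suminf summable_len) (auto simp: seg_len_nonneg)

lemma total_len_pos: "0 < total_len"
  using first_len_pos offset_le_total_len[of 1] by (simp add: offset_def)

lemma eventually_less_offset: "s < total_len \<Longrightarrow> eventually (\<lambda>n. s < offset n) sequentially"
  using order_tendstoD(1)[OF offset_tendsto] .

lemma seg_index_bounds:
  assumes "s \<in> {0..<total_len}"
  shows "offset (seg_index s) \<le> s" "s < offset (Suc (seg_index s))"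
proof -
  obtain n where "s < offset n"
    using eventually_less_offset assms by (auto simp: eventually_sequentially)
  moreover have "n \<noteq> 0" using calculation assms by (cases n) auto
  ultimately have ex: "\<exists>n. s < offset (Suc n)" using not0_implies_Suc by blast
  then show "s < offset (Suc (seg_index s))"
    unfolding seg_index_def by (rule LeastI_ex)
  show "offset (seg_index s) \<le> s"
  proof (cases "seg_index s")
    case 0
    then show ?thesis using assms by simp
  next
    case (Suc k)
    then have "\<not> s < offset (Suc k)"
      unfolding seg_index_def by (metis lessI not_less_Least)
    then show ?thesis using Suc by simp
  qed
qed

lemma seg_index_arc:
  assumes "s \<in> {0..<total_len}"
  shows "s - offset (seg_index s) \<in> {0..seg_len (c (seg_index s))}"
  using seg_index_bounds[OF assms] by (simp add: offset_Suc)

lemma seg_index_mono: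
  assumes "s \<le> s'" "s' \<in> {0..<total_len}"
  shows "seg_index s \<le> seg_index s'"
proof -
  have "s < offset (Suc (seg_index s'))" using seg_index_bounds(2)[OF assms(2)] assms(1) by linarith
  then show ?thesis unfolding seg_index_def[of s] by (rule Least_le)
qed

lemma chain_path_gpts: "s \<in> {0..<total_len} \<Longrightarrow> chain_path s \<in> gpts G"
  unfolding chain_path_def using seg_point_gpts[OF graph edge_seg seg_index_arc] .

lemma chain_path_0: "chain_path 0 = seg_start G (c 0)"
proof -
  have "seg_index 0 = 0"
    unfolding seg_index_def using first_len_pos by (intro Least_eq_0) (simp add: offset_def)
  then show ?thesis by (simp add: chain_path_def)
qed

lemma chain_from_to_upt:
  "m \<le> n \<Longrightarrow> chain_from_to G (seg_start G (c m)) (seg_start G (c n)) (map c [m..<n])"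
proof (induction n)
  case 0
  then show ?case by simp
next
  case (Suc n)
  show ?case
  proof (cases "m = Suc n")
    case False
    then have "chain_from_to G (seg_start G (c m)) (seg_start G (c (Suc n))) (map c [m..<n] @ [c n])"
      using Suc chain_from_to_append chain_from_to_seg[OF edge_seg] linked by fastforce
    then show ?thesis using Suc.prems False by simp
  qed simp
qed

lemma chain_len_upt:
  assumes "m \<le> n"
  shows "chain_len (map c [m..<n]) = offset n - offset m"
proof -
  have "(\<Sum>j<m. seg_len (c j)) + (\<Sum>j=m..<n. seg_len (c j)) = (\<Sum>j<n. seg_len (c j))"
    using sum.atLeastLessThan_concat[of 0 m n] assms by (simp add: atLeast0LessThan)
  then show ?thesis unfolding chain_len_map_upt offset_def by linarith
qed

lemma gdist_chain_path_start:
  assumes s: "s \<in> {0..<total_len}" and n: "s < offset n"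
  shows "gdist G (chain_path s) (seg_start G (c n)) \<le> offset n - s"
proof -
  define k where "k = seg_index s"
  define r where "r = s - offset k"
  have r: "r \<in> {0..seg_len (c k)}" using seg_index_arc[OF s] by (simp add: r_def k_def)
  have "k < n"
  proof (rule ccontr)
    assume "\<not> k < n"
    then have "offset n \<le> offset k" by (simp add: offset_mono)
    then show False using seg_index_bounds(1)[OF s] n by (simp add: k_def)
  qed
  have "chain_from_to G (chain_path s) (seg_start G (c (Suc k))) [sub_seg (c k) r (seg_len (c k))]"
    using chain_from_to_sub_seg[OF edge_seg r, of "seg_len (c k)"] linked
    by (simp add: chain_path_def k_def r_def seg_len_nonneg)
  then have chain: "chain_from_to G (chain_path s) (seg_start G (c n))
      (sub_seg (c k) r (seg_len (c k)) # map c [Suc k..<n])"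
    using chain_from_to_append[OF _ chain_from_to_upt[of "Suc k" n]] \<open>k < n\<close> by fastforce
  have "gdist G (chain_path s) (seg_start G (c n)) \<le>
      seg_len (sub_seg (c k) r (seg_len (c k))) + (offset n - offset (Suc k))"
    using gdist_le_chain_len[OF chain] chain_len_upt[of "Suc k" n] \<open>k < n\<close>
    by (simp add: chain_len_Cons)
  also have "\<dots> \<le> offset n - s"
    using seg_len_sub_seg[of "c k" r "seg_len (c k)"] r by (simp add: offset_Suc r_def)
  finally show ?thesis .
qed


lemma seg_start_gpts: "seg_start G (c n) \<in> gpts G"
  using seg_point_gpts[OF graph edge_seg, of 0 n] by (simp add: seg_len_nonneg)

lemma gdist_chain_path_forward:
  assumes "s \<le> s'" "s \<in> {0..<total_len}" "s' \<in> {0..<total_len}"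
  shows "gdist G (chain_path s) (chain_path s') \<le> s' - s"
proof -
  define k' where "k' = seg_index s'"
  define r' where "r' = s' - offset k'"
  have r': "r' \<in> {0..seg_len (c k')}" using seg_index_arc[OF assms(3)] by (simp add: r'_def k'_def)
  have s': "chain_path s' = seg_point G (c k') r'" by (simp add: chain_path_def r'_def k'_def)
  show ?thesis
  proof (cases "s < offset k'")
    case True
    have "gdist G (chain_path s) (seg_start G (c k')) \<le> offset k' - s"
      using gdist_chain_path_start[OF assms(2) True] .
    moreover have "gdist G (seg_start G (c k')) (chain_path s') \<le> r'"
      using gdist_seg_point[OF edge_seg _ r', of 0] r' s' by simp
    moreover have "gdist G (chain_path s) (chain_path s') \<le>
        gdist G (chain_path s) (seg_start G (c k')) + gdist G (seg_start G (c k')) (chain_path s')"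
      using gdist_triangle[OF graph chain_path_gpts[OF assms(2)] seg_start_gpts chain_path_gpts[OF assms(3)]] .
    ultimately show ?thesis by (simp add: r'_def)
  next
    case False
    have "seg_index s \<le> k'" using seg_index_mono[OF assms(1,3)] by (simp add: k'_def)
    moreover have "\<not> seg_index s < k'"
      using offset_mono[of "Suc (seg_index s)" k'] seg_index_bounds(2)[OF assms(2)] False by auto
    ultimately have "seg_index s = k'" by simp
    then have "chain_path s = seg_point G (c k') (s - offset k')"
      and arc: "s - offset k' \<in> {0..seg_len (c k')}"
      using seg_index_arc[OF assms(2)] by (simp_all add: chain_path_def)
    then show ?thesis
      using gdist_seg_point[OF edge_seg arc r'] s' assms(1) by (simp add: r'_def)
  qed
qed

lemma gdist_chain_path:
  assumes "s \<in> {0..<total_len}" "s' \<in> {0..<total_len}"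
  shows "gdist G (chain_path s) (chain_path s') \<le> \<bar>s - s'\<bar>"
proof (cases "s \<le> s'")
  case True
  then show ?thesis using gdist_chain_path_forward[OF True assms] by simp
next
  case False
  then show ?thesis using gdist_chain_path_forward[of s' s] assms by (simp add: gdist_commute)
qed

lemma chain_path_graph_path: "graph_path G chain_path total_len"
  unfolding graph_path_def by (simp add: total_len_pos chain_path_gpts gdist_chain_path)

lemma dist_seg_start:
  "dist (\<iota> (seg_start G (c m))) (\<iota> (seg_start G (c n))) \<le> dist (offset m) (offset n)"
proof -
  have "dist (\<iota> (seg_start G (c m))) (\<iota> (seg_start G (c n))) \<le> offset n - offset m" if "m \<le> n" for m n
    using gdist_le_chain_len[OF chain_from_to_upt[OF that]] chain_len_upt[OF that]
    by (simp add: completion_dist[OF compl seg_start_gpts seg_start_gpts])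
  from this[of m n] this[of n m] show ?thesis
    by (cases "m \<le> n") (simp_all add: dist_real_def dist_commute offset_mono)
qed

lemma chain_limit: "chain_limit \<in> M" "(\<lambda>n. \<iota> (seg_start G (c n))) \<longlonglongrightarrow> chain_limit"
proof -
  have "Cauchy offset" using offset_tendsto by (rule LIMSEQ_imp_Cauchy)
  have cauchy: "Cauchy (\<lambda>n. \<iota> (seg_start G (c n)))"
  proof (rule metric_CauchyI)
    fix e :: real assume "0 < e"
    then obtain N where N: "\<And>m n. N \<le> m \<Longrightarrow> N \<le> n \<Longrightarrow> dist (offset m) (offset n) < e"
      using \<open>Cauchy offset\<close> unfolding Cauchy_def by blast
    show "\<exists>N. \<forall>m\<ge>N. \<forall>n\<ge>N. dist (\<iota> (seg_start G (c m))) (\<iota> (seg_start G (c n))) < e"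
    proof (intro exI allI impI)
      fix m n assume "N \<le> m" "N \<le> n"
      then show "dist (\<iota> (seg_start G (c m))) (\<iota> (seg_start G (c n))) < e"
        using N[of m n] dist_seg_start[of m n] by linarith
    qed
  qed
  have "complete M" using compl unfolding is_completion_def by blast
  moreover have "\<forall>n. \<iota> (seg_start G (c n)) \<in> M" using completion_mem[OF compl seg_start_gpts] by blast
  ultimately obtain l where "l \<in> M" "(\<lambda>n. \<iota> (seg_start G (c n))) \<longlonglongrightarrow> l"
    using cauchy unfolding complete_def by (metis (no_types, lifting))
  then show "chain_limit \<in> M" "(\<lambda>n. \<iota> (seg_start G (c n))) \<longlonglongrightarrow> chain_limit"
    unfolding chain_limit_def by (simp_all add: limI)
qed

lemma dist_chain_path_limit:
  assumes s: "s \<in> {0..<total_len}"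
  shows "dist (\<iota> (chain_path s)) chain_limit \<le> total_len - s"
proof (rule tendsto_le[OF trivial_limit_sequentially])
  show "(\<lambda>n. offset n - s) \<longlonglongrightarrow> total_len - s"
    by (intro tendsto_intros offset_tendsto)
  show "(\<lambda>n. dist (\<iota> (chain_path s)) (\<iota> (seg_start G (c n)))) \<longlonglongrightarrow> dist (\<iota> (chain_path s)) chain_limit"
    by (intro tendsto_intros chain_limit)
  have "s < total_len" using s by simp
  then show "eventually (\<lambda>n. dist (\<iota> (chain_path s)) (\<iota> (seg_start G (c n))) \<le> offset n - s) sequentially"
    by (rule eventually_mono[OF eventually_less_offset])
      (simp add: gdist_chain_path_start[OF s] completion_dist[OF compl chain_path_gpts[OF s] seg_start_gpts])
qed

lemma chain_path_tendsto: "((\<lambda>s. \<iota> (chain_path s)) \<longlongrightarrow> chain_limit) (at_left total_len)"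
proof -
  have "((\<lambda>s. total_len - s) \<longlongrightarrow> 0) (at_left total_len)"
    using tendsto_diff[OF tendsto_const tendsto_ident_at, of total_len total_len "{..<total_len}"]
    by simp
  moreover have "eventually (\<lambda>s. s \<in> {0<..<total_len}) (at_left total_len)"
    using total_len_pos by (rule eventually_at_left_real)
  then have "eventually (\<lambda>s. norm (dist (\<iota> (chain_path s)) chain_limit) \<le> total_len - s) (at_left total_len)"
  proof (rule eventually_mono)
    fix s assume "s \<in> {0<..<total_len}"
    then show "norm (dist (\<iota> (chain_path s)) chain_limit) \<le> total_len - s"
      using dist_chain_path_limit[of s] by simp
  qed
  ultimately have "((\<lambda>s. dist (\<iota> (chain_path s)) chain_limit) \<longlongrightarrow> 0) (at_left total_len)"
    by (rule Lim_null_comparison[rotated])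
  then show ?thesis by (rule tendsto_dist_iff[THEN iffD2])
qed

end

section \<open>Isolation of vertices\<close>

text \<open>Local finiteness keeps the vertices away from every point of the graph; the bounds come
  from 1-Lipschitz bump functions that vanish at the point and equal \<open>\<delta>\<close> at all other vertices.\<close>

lemma gdist_vertex_vertex_ge:
  assumes G: "metric_graph G" and w: "w \<in> verts G"
  shows "\<exists>\<delta>>0. \<forall>v\<in>verts G. v \<noteq> w \<longrightarrow> \<delta> \<le> gdist G (GV w) (GV v)"
proof -
  have fin: "finite (incident G w)" using G w by (simp add: metric_graph_def)
  define \<delta> where "\<delta> = Min (insert 1 ((\<lambda>e. elen G e / 2) ` incident G w))"
  have \<delta>_pos: "0 < \<delta>"
    unfolding \<delta>_def using fin metric_graph_elen_pos[OF G] by (auto simp: incident_def)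
  have \<delta>_le: "\<delta> \<le> elen G e / 2" if "e \<in> edges G" "fst (ends G e) = w \<or> snd (ends G e) = w" for e
    unfolding \<delta>_def using fin that by (intro Min_le) (auto simp: incident_def)
  define g where "g e s = min \<delta> (min (if fst (ends G e) = w then s else \<delta>)
    (if snd (ends G e) = w then elen G e - s else \<delta>))" for e s
  define h where "h z = (case z of GV v \<Rightarrow> if v = w then 0 else \<delta> | GE e s \<Rightarrow> g e s)" for z
  have profile: "h (gpos G e s) = g e s" if e: "e \<in> edges G" and s: "s \<in> {0..elen G e}" for e s
  proof -
    have "0 < elen G e" using metric_graph_elen_pos[OF G e] .
    then consider "s = 0" | "s = elen G e" | "0 < s \<and> s < elen G e" using s by fastforce
    then show ?thesis
      using \<open>0 < elen G e\<close> \<delta>_pos \<delta>_le[OF e]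
      by cases (auto simp: h_def g_def gpos_interior min_def)
  qed
  have "\<bar>g e a - g e b\<bar> \<le> \<bar>a - b\<bar>" for e a b
    unfolding g_def by (auto simp: min_def abs_if)
  then have lip: "\<bar>h (gpos G e a) - h (gpos G e b)\<bar> \<le> \<bar>a - b\<bar>"
    if "e \<in> edges G" "a \<in> {0..elen G e}" "b \<in> {0..elen G e}" for e a b
    using that by (simp add: profile)
  show ?thesis
  proof (intro exI conjI ballI impI)
    fix v assume v: "v \<in> verts G" "v \<noteq> w"
    have "\<bar>h (GV w) - h (GV v)\<bar> \<le> gdist G (GV w) (GV v)"
      using abs_diff_le_gdist[OF G _ _ lip] v w by (simp add: gpts_def)
    then show "\<delta> \<le> gdist G (GV w) (GV v)" using v \<delta>_pos by (simp add: h_def)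
  qed (rule \<delta>_pos)
qed

lemma gdist_edge_point_vertex_ge:
  fixes G :: "('v, 'e) mgraph"
  assumes G: "metric_graph G" and e0: "e0 \<in> edges G" and s0: "0 < s0" "s0 < elen G e0"
  shows "\<exists>\<delta>>0. \<forall>v\<in>verts G. \<delta> \<le> gdist G (GE e0 s0) (GV v)"
proof -
  define \<delta> where "\<delta> = min s0 (elen G e0 - s0)"
  have \<delta>_pos: "0 < \<delta>" using s0 by (simp add: \<delta>_def)
  define g where "g e s = (if e = e0 then min \<delta> \<bar>s - s0\<bar> else \<delta>)" for e s
  define h where "h z = (case z of GV v \<Rightarrow> \<delta> | GE e s \<Rightarrow> g e s)" for z :: "('v, 'e) gpt"
  have profile: "h (gpos G e s) = g e s" if s: "s \<in> {0..elen G e}" for e s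
  proof -
    consider "s = 0" | "s = elen G e" | "0 < s \<and> s < elen G e" using s by fastforce
    then show ?thesis
      using s0 by cases (auto simp: h_def g_def gpos_def \<delta>_def min_def)
  qed
  have "\<bar>g e a - g e b\<bar> \<le> \<bar>a - b\<bar>" for e a b
    unfolding g_def by (auto simp: min_def abs_if)
  then have lip: "\<bar>h (gpos G e a) - h (gpos G e b)\<bar> \<le> \<bar>a - b\<bar>"
    if "a \<in> {0..elen G e}" "b \<in> {0..elen G e}" for e a b
    using that by (simp add: profile)
  show ?thesis
  proof (intro exI conjI ballI)
    fix v assume v: "v \<in> verts G"
    have "\<bar>h (GE e0 s0) - h (GV v)\<bar> \<le> gdist G (GE e0 s0) (GV v)"
      using abs_diff_le_gdist[OF G _ _ lip] v e0 s0 by (auto simp: gpts_def)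
    then show "\<delta> \<le> gdist G (GE e0 s0) (GV v)" using \<delta>_pos by (simp add: h_def g_def)
  qed (rule \<delta>_pos)
qed

lemma gdist_vertex_ge:
  assumes G: "metric_graph G" and y: "y \<in> gpts G"
  obtains \<delta> where "0 < \<delta>" "\<And>v. v \<in> verts G \<Longrightarrow> GV v \<noteq> y \<Longrightarrow> \<delta> \<le> gdist G y (GV v)"
proof (cases y)
  case (GV w)
  then show ?thesis
    using that gdist_vertex_vertex_ge[OF G, of w] y by (auto simp: gpts_def)
next
  case (GE e s)
  then show ?thesis
    using that gdist_edge_point_vertex_ge[OF G, of e s] y by (auto simp: gpts_def)
qed

lemma vertex_seq_tendsto_eventually_eq:
  assumes G: "metric_graph G" and compl: "is_completion G \<iota> M" and y: "y \<in> gpts G"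
    and v: "\<And>n. v n \<in> verts G" and lim: "(\<lambda>n. \<iota> (GV (v n))) \<longlonglongrightarrow> \<iota> y"
  shows "eventually (\<lambda>n. GV (v n) = y) sequentially"
proof -
  obtain \<delta> where \<delta>: "0 < \<delta>" "\<And>u. u \<in> verts G \<Longrightarrow> GV u \<noteq> y \<Longrightarrow> \<delta> \<le> gdist G y (GV u)"
    using gdist_vertex_ge[OF G y] by blast
  have "eventually (\<lambda>n. dist (\<iota> (GV (v n))) (\<iota> y) < \<delta>) sequentially"
    using lim \<delta>(1) by (rule tendstoD)
  then show ?thesis
  proof (rule eventually_mono)
    fix n assume "dist (\<iota> (GV (v n))) (\<iota> y) < \<delta>"
    moreover have "GV (v n) \<in> gpts G" using v by (simp add: gpts_def)
    ultimately have "gdist G y (GV (v n)) < \<delta>"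
      using completion_dist[OF compl _ y] by (simp add: gdist_commute)
    then show "GV (v n) = y" using \<delta>(2)[OF v] by force
  qed
qed

section \<open>Harmonic functions along edges\<close>

lemma outward_deriv_other_end:
  assumes "metric_graph G" "e \<in> incident G v"
  shows "outward_deriv G \<iota> f v e = (f (\<iota> (GV (other_end G v e))) - f (\<iota> (GV v))) / elen G e"
  using assms metric_graph_elen_pos[of G e]
  by (auto simp: incident_def outward_deriv_def other_end_def Let_def diff_divide_distrib)

lemma affine_le_max:
  fixes \<alpha> \<beta> a b p :: real
  assumes "min a b \<le> p" "p \<le> max a b"
  shows "\<alpha> + \<beta> * p \<le> max (\<alpha> + \<beta> * a) (\<alpha> + \<beta> * b)"
proof -
  have "\<beta> * p \<le> \<beta> * max a b \<or> \<beta> * p \<le> \<beta> * min a b"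
    using assms by (cases "0 \<le> \<beta>") (auto intro: mult_left_mono mult_left_mono_neg)
  then show ?thesis by (auto simp: max_def min_def split: if_splits)
qed

lemma harmonic_edge_affine:
  assumes G: "metric_graph G" and harm: "harmonic G \<iota> M f"
    and e: "e \<in> edges G" and s: "s \<in> {0..elen G e}"
  shows "f (\<iota> (gpos G e s)) = f (\<iota> (GV (fst (ends G e))))
    + (f (\<iota> (GV (snd (ends G e)))) - f (\<iota> (GV (fst (ends G e))))) / elen G e * s"
proof -
  obtain \<alpha> \<beta> where affine: "\<And>s. s \<in> {0..elen G e} \<Longrightarrow> f (\<iota> (gpos G e s)) = \<alpha> + \<beta> * s"
    using harm e unfolding harmonic_def by blast
  have l: "0 < elen G e" using metric_graph_elen_pos[OF G e] .
  have "f (\<iota> (GV (fst (ends G e)))) = \<alpha>" "f (\<iota> (GV (snd (ends G e)))) = \<alpha> + \<beta> * elen G e"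
    using affine[of 0] affine[of "elen G e"] l by simp_all
  then show ?thesis using affine[OF s] l by simp
qed

lemma harmonic_edge_deriv:
  assumes G: "metric_graph G" and harm: "harmonic G \<iota> M f"
    and e: "e \<in> edges G" and s: "0 < s" "s < elen G e"
  shows "((\<lambda>r. f (\<iota> (gpos G e r))) has_real_derivative
    (f (\<iota> (GV (snd (ends G e)))) - f (\<iota> (GV (fst (ends G e))))) / elen G e) (at s)"
proof (rule has_field_derivative_transform_within_open[where S = "{0<..<elen G e}"])
  show "((\<lambda>r. f (\<iota> (GV (fst (ends G e))))
      + (f (\<iota> (GV (snd (ends G e)))) - f (\<iota> (GV (fst (ends G e))))) / elen G e * r)
    has_real_derivative (f (\<iota> (GV (snd (ends G e)))) - f (\<iota> (GV (fst (ends G e))))) / elen G e) (at s)"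
    using metric_graph_elen_pos[OF G e] by (auto intro!: derivative_eq_intros)
qed (use s harmonic_edge_affine[OF G harm e] metric_graph_elen_pos[OF G e] in auto)

lemma harmonic_le_max:
  assumes G: "metric_graph G" and harm: "harmonic G \<iota> M f" and e: "e \<in> edges G"
    and ab: "a \<in> {0..elen G e}" "b \<in> {0..elen G e}" and p: "min a b \<le> p" "p \<le> max a b"
  shows "f (\<iota> (gpos G e p)) \<le> max (f (\<iota> (gpos G e a))) (f (\<iota> (gpos G e b)))"
proof -
  define \<alpha> where "\<alpha> = f (\<iota> (GV (fst (ends G e))))"
  define \<beta> where "\<beta> = (f (\<iota> (GV (snd (ends G e)))) - f (\<iota> (GV (fst (ends G e))))) / elen G e"
  have val: "f (\<iota> (gpos G e x)) = \<alpha> + \<beta> * x" if "x \<in> {0..elen G e}" for x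
    using harmonic_edge_affine[OF G harm e that] by (simp add: \<alpha>_def \<beta>_def)
  have "p \<in> {0..elen G e}" using ab p by auto
  then show ?thesis using affine_le_max[OF p, of \<alpha> \<beta>] val ab by simp
qed

lemma harmonic_seg_point_le_max:
  assumes G: "metric_graph G" and harm: "harmonic G \<iota> M f"
    and seg: "is_edge_seg G sg" and r: "r \<in> {0..seg_len sg}"
  shows "f (\<iota> (seg_point G sg r)) \<le> max (f (\<iota> (seg_start G sg))) (f (\<iota> (seg_end G sg)))"
proof (cases sg)
  case (fields e a b)
  then have "r \<in> {0..\<bar>b - a\<bar>}" using r by simp
  note p = sgn_param_between[OF this]
  show ?thesis
    using harmonic_le_max[OF G harm _ _ _ p[THEN conjunct1] p[THEN conjunct2]] seg fields by simp
qed

lemma harmonic_exists_lower_neighbour: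
  assumes G: "metric_graph G" and harm: "harmonic G \<iota> M f" and v: "v \<in> verts G - bverts G"
    and e: "e \<in> incident G v" and up: "f (\<iota> (GV v)) < f (\<iota> (GV (other_end G v e)))"
  shows "\<exists>e'\<in>incident G v. f (\<iota> (GV (other_end G v e'))) < f (\<iota> (GV v))"
proof (rule ccontr)
  define slope where "slope e' = (f (\<iota> (GV (other_end G v e'))) - f (\<iota> (GV v))) / elen G e'" for e'
  assume none: "\<not> ?thesis"
  have nonneg: "0 \<le> slope e'" if e': "e' \<in> incident G v" for e'
  proof -
    have "f (\<iota> (GV v)) \<le> f (\<iota> (GV (other_end G v e')))" using none e' by force
    moreover have "0 < elen G e'" using e' metric_graph_elen_pos[OF G] by (simp add: incident_def)
    ultimately show ?thesis by (simp add: slope_def)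
  qed
  have "0 < slope e"
    using up metric_graph_elen_pos[OF G] e by (simp add: slope_def incident_def)
  also have "\<dots> \<le> (\<Sum>e'\<in>incident G v. slope e')"
    using G v e nonneg by (intro member_le_sum) (auto simp: metric_graph_def)
  also have "\<dots> = (\<Sum>e'\<in>incident G v. outward_deriv G \<iota> f v e')"
    by (rule sum.cong) (simp_all add: slope_def outward_deriv_other_end[OF G])
  also have "\<dots> = 0" using harm v unfolding harmonic_def by blast
  finally show False by simp
qed

lemma volume_ge_sum_elen:
  assumes "finite A" "A \<subseteq> edges G" "\<forall>e\<in>A. elen G e \<ge> 0"
    and inside: "\<And>e s. e \<in> A \<Longrightarrow> s \<in> {0<..<elen G e} \<Longrightarrow> \<iota> (GE e s) \<in> S"
  shows "(\<Sum>e\<in>A. ennreal (elen G e)) \<le> volume G \<iota> S"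
proof -
  define g where "g e = emeasure lborel {s \<in> {0<..<elen G e}. \<iota> (GE e s) \<in> S}" for e
  have "(\<Sum>e\<in>A. ennreal (elen G e)) = (\<Sum>e\<in>A. g e)"
  proof (rule sum.cong)
    fix e assume "e \<in> A"
    then have "{s \<in> {0<..<elen G e}. \<iota> (GE e s) \<in> S} = {0<..<elen G e}" using inside by blast
    then show "ennreal (elen G e) = g e" using \<open>e \<in> A\<close> assms(3) by (simp add: g_def)
  qed simp
  also have "\<dots> = (\<integral>\<^sup>+e. g e \<partial>count_space A)"
    using assms(1) by (rule nn_integral_count_space_finite[symmetric])
  also have "\<dots> = (\<integral>\<^sup>+e. g e * indicator A e \<partial>count_space UNIV)"
    by (rule nn_integral_count_space_indicator) simp
  also have "\<dots> \<le> (\<integral>\<^sup>+e. g e * indicator (edges G) e \<partial>count_space UNIV)"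
    using assms(2) by (intro nn_integral_mono) (auto split: split_indicator)
  also have "\<dots> = volume G \<iota> S"
    unfolding volume_def g_def by (rule nn_integral_count_space_indicator[symmetric]) simp
  finally show ?thesis .
qed

lemma min_less_affine:
  fixes A B s l :: real
  assumes "0 < s" "s < l" "A \<noteq> B"
  shows "min A B < A + (B - A) / l * s"
proof -
  have \<theta>: "0 < s / l" "s / l < 1" using assms by simp_all
  have eq: "A + (B - A) / l * s = A + (B - A) * (s / l)" by simp
  show ?thesis
  proof (cases "A < B")
    case True
    then have "0 < (B - A) * (s / l)" using \<theta>(1) by (intro mult_pos_pos) simp_all
    then show ?thesis using True eq by linarith
  next
    case False
    then have "(B - A) * 1 < (B - A) * (s / l)"
      using assms(3) \<theta> by (intro mult_strict_left_mono_neg) auto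
    then show ?thesis using False eq by simp
  qed
qed

lemma regular_level_point_on_sloped_edge:
  assumes G: "metric_graph G" and harm: "harmonic G \<iota> M f" and reg: "regular_value G \<iota> M f t"
    and x: "x \<in> gpts G" and fx: "f (\<iota> x) = t"
  obtains e s where "x = GE e s" "e \<in> edges G" "0 < s" "s < elen G e"
    "f (\<iota> (GV (fst (ends G e)))) \<noteq> f (\<iota> (GV (snd (ends G e))))"
proof -
  have not_crit: "\<not> critical_point G \<iota> f x"
    using reg fx by (auto simp: regular_value_def critical_value_def)
  then obtain e s where xe: "x = GE e s" and e: "e \<in> edges G" "0 < s" "s < elen G e"
    using x by (auto simp: gpts_def critical_point_def)
  moreover have "f (\<iota> (GV (fst (ends G e)))) \<noteq> f (\<iota> (GV (snd (ends G e))))"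
  proof
    assume "f (\<iota> (GV (fst (ends G e)))) = f (\<iota> (GV (snd (ends G e))))"
    then have "((\<lambda>r. f (\<iota> (gpos G e r))) has_real_derivative 0) (at s)"
      using harmonic_edge_deriv[OF G harm e] by simp
    then show False using not_crit x xe by (auto simp: critical_point_def)
  qed
  ultimately show ?thesis using that by blast
qed

section \<open>The descent path\<close>

locale harmonic_descent =
  fixes G :: "('v, 'e) mgraph" and \<iota> :: "('v, 'e) gpt \<Rightarrow> 'm::metric_space" and M :: "'m set"
    and f :: "'m \<Rightarrow> real" and e0 :: 'e and s0 :: real and S :: "'m set"
  assumes graph: "metric_graph G" and compl: "is_completion G \<iota> M" and harm: "harmonic G \<iota> M f"
    and e0: "e0 \<in> edges G" and s0: "0 < s0" "s0 < elen G e0"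
    and sloped: "f (\<iota> (GV (fst (ends G e0)))) \<noteq> f (\<iota> (GV (snd (ends G e0))))"
    and finite_volume: "volume G \<iota> S < \<infinity>"
    and sublevel: "{x \<in> M. f x \<le> f (\<iota> (GE e0 s0))} \<subseteq> S"
begin

abbreviation F :: "'v \<Rightarrow> real" where
  "F v \<equiv> f (\<iota> (GV v))"

abbreviation level :: real where
  "level \<equiv> f (\<iota> (GE e0 s0))"

definition start_vertex :: 'v where
  "start_vertex = (if F (snd (ends G e0)) < F (fst (ends G e0)) then snd (ends G e0) else fst (ends G e0))"

definition down_edge :: "'v \<Rightarrow> 'e" where
  "down_edge v = (SOME e. e \<in> incident G v \<and> F (other_end G v e) < F v)"

definition up_edge :: "'v \<Rightarrow> 'e" where
  "up_edge v = (SOME e. e \<in> incident G v \<and> F v < F (other_end G v e))"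

definition walk :: "nat \<Rightarrow> 'v" where
  "walk = rec_nat start_vertex (\<lambda>_ v. if v \<in> bverts G then v else other_end G v (down_edge v))"

text \<open>Once the walk has stopped at a boundary vertex, the degenerate segments of the path sit
  on an edge through that vertex, so that every segment is an edge segment.\<close>

definition step_edge :: "nat \<Rightarrow> 'e" where
  "step_edge n = (if walk n \<in> bverts G then up_edge (walk n) else down_edge (walk n))"

definition descent_seg :: "nat \<Rightarrow> 'e \<times> real \<times> real" where
  "descent_seg n = (case n of
      0 \<Rightarrow> (e0, s0, end_param G e0 start_vertex)
    | Suc k \<Rightarrow> (step_edge k, end_param G (step_edge k) (walk k), end_param G (step_edge k) (walk (Suc k))))"

lemma walk_0: "walk 0 = start_vertex"
  by (simp add: walk_def)

lemma walk_Suc: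
  "walk (Suc n) = (if walk n \<in> bverts G then walk n else other_end G (walk n) (down_edge (walk n)))"
  by (simp add: walk_def)

lemma start_vertex_below_level: "F start_vertex < level"
proof -
  have "level = F (fst (ends G e0)) + (F (snd (ends G e0)) - F (fst (ends G e0))) / elen G e0 * s0"
    using harmonic_edge_affine[OF graph harm e0, of s0] s0 by (simp add: gpos_interior)
  moreover have "F start_vertex = min (F (fst (ends G e0))) (F (snd (ends G e0)))"
    by (simp add: start_vertex_def min_def)
  ultimately show ?thesis using min_less_affine[OF s0 sloped] by linarith
qed

lemma start_vertex_has_upper_neighbour:
  "e0 \<in> incident G start_vertex" "F start_vertex < F (other_end G start_vertex e0)"
  using e0 sloped by (auto simp: start_vertex_def incident_def other_end_def)

lemma down_edge:
  assumes "v \<in> verts G - bverts G" "\<exists>e\<in>incident G v. F v < F (other_end G v e)"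
  shows "down_edge v \<in> incident G v" "F (other_end G v (down_edge v)) < F v"
proof -
  have "\<exists>e\<in>incident G v. F (other_end G v e) < F v"
    using harmonic_exists_lower_neighbour[OF graph harm] assms by blast
  then show "down_edge v \<in> incident G v" "F (other_end G v (down_edge v)) < F v"
    unfolding down_edge_def by (metis (mono_tags, lifting) someI_ex)+
qed

lemma up_edge: "\<exists>e\<in>incident G v. F v < F (other_end G v e) \<Longrightarrow> up_edge v \<in> incident G v"
  unfolding up_edge_def by (metis (mono_tags, lifting) someI_ex)

lemma walk_invariant:
  "walk n \<in> verts G \<and> (\<exists>e\<in>incident G (walk n). F (walk n) < F (other_end G (walk n) e))"
proof (induction n)
  case 0
  show ?case
    using start_vertex_has_upper_neighbour e0 graph
    by (auto simp: walk_0 start_vertex_def metric_graph_def)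
next
  case (Suc n)
  show ?case
  proof (cases "walk n \<in> bverts G")
    case True
    then show ?thesis using Suc.IH by (simp add: walk_Suc)
  next
    case False
    define d where "d = down_edge (walk n)"
    have d: "d \<in> incident G (walk n)" "F (other_end G (walk n) d) < F (walk n)"
      using down_edge[of "walk n"] Suc.IH False by (simp_all add: d_def)
    have "walk (Suc n) = other_end G (walk n) d" using False by (simp add: walk_Suc d_def)
    moreover have "F (other_end G (walk n) d) < F (other_end G (other_end G (walk n) d) d)"
      using d(2) other_end_other_end[OF d(1)] by simp
    ultimately show ?thesis
      using other_end_verts[OF graph d(1)] incident_other_end[OF d(1)] by auto
  qed
qed

lemma walk_verts: "walk n \<in> verts G"
  using walk_invariant by blast

lemma step_edge:
  "step_edge n \<in> incident G (walk n)" "step_edge n \<in> incident G (walk (Suc n))"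
  "walk n \<notin> bverts G \<Longrightarrow> walk (Suc n) = other_end G (walk n) (step_edge n)"
  "walk n \<notin> bverts G \<Longrightarrow> F (walk (Suc n)) < F (walk n)"
proof -
  note down = down_edge[of "walk n"] and up = up_edge[of "walk n"]
  show "walk n \<notin> bverts G \<Longrightarrow> walk (Suc n) = other_end G (walk n) (step_edge n)"
    by (simp add: walk_Suc step_edge_def)
  show "step_edge n \<in> incident G (walk n)"
    using up down walk_invariant[of n] by (simp add: step_edge_def)
  show "step_edge n \<in> incident G (walk (Suc n))"
    using up incident_other_end[OF down(1)] walk_invariant[of n] by (simp add: step_edge_def walk_Suc)
  show "walk n \<notin> bverts G \<Longrightarrow> F (walk (Suc n)) < F (walk n)"
    using down walk_invariant[of n] by (simp add: walk_Suc)
qed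

lemma walk_decseq: "decseq (\<lambda>n. F (walk n))"
  by (rule decseq_SucI) (use step_edge(4) walk_Suc in fastforce)

lemma walk_below_level: "F (walk n) < level"
  using walk_decseq[unfolded decseq_def, rule_format, of 0 n] start_vertex_below_level
  by (simp add: walk_0)


lemma descent_seg_0: "descent_seg 0 = (e0, s0, end_param G e0 start_vertex)"
  by (simp add: descent_seg_def)

lemma descent_seg_Suc: "descent_seg (Suc n) =
    (step_edge n, end_param G (step_edge n) (walk n), end_param G (step_edge n) (walk (Suc n)))"
  by (simp add: descent_seg_def)

lemma step_edge_edges: "step_edge n \<in> edges G"
  using step_edge(1) by (simp add: incident_def)

lemma descent_seg_edge_seg: "is_edge_seg G (descent_seg n)"
proof (cases n)
  case 0
  then show ?thesis using e0 s0 end_param_mem[OF graph e0] by (simp add: descent_seg_0)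
next
  case (Suc k)
  then show ?thesis
    using step_edge_edges[of k] end_param_mem[OF graph step_edge_edges[of k]] by (simp add: descent_seg_Suc)
qed

lemma seg_end_descent_seg: "seg_end G (descent_seg n) = GV (walk n)"
  using gpos_end_param[OF graph start_vertex_has_upper_neighbour(1)]
    gpos_end_param[OF graph step_edge(2)]
  by (cases n) (simp_all add: descent_seg_0 descent_seg_Suc walk_0)

lemma seg_start_descent_seg_Suc: "seg_start G (descent_seg (Suc n)) = GV (walk n)"
  using gpos_end_param[OF graph step_edge(1)] by (simp add: descent_seg_Suc)

lemma seg_len_descent_seg_Suc:
  "seg_len (descent_seg (Suc n)) = (if walk n \<in> bverts G then 0 else elen G (step_edge n))"
proof (cases "walk n \<in> bverts G")
  case True
  then show ?thesis by (simp add: descent_seg_Suc walk_Suc)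
next
  case False
  then have "other_end G (walk n) (step_edge n) \<noteq> walk n"
    using step_edge(3,4)[OF False] by auto
  then show ?thesis
    using False end_param_other_end_diff[OF graph step_edge(1)] step_edge(3)[OF False]
    by (simp add: descent_seg_Suc)
qed

lemma seg_len_descent_seg_0: "0 < seg_len (descent_seg 0)"
  using s0 by (auto simp: descent_seg_0 end_param_def)

lemma inj_on_step_edge: "inj_on step_edge {n. walk n \<notin> bverts G}"
proof (rule linorder_inj_onI')
  fix j k assume j: "j \<in> {n. walk n \<notin> bverts G}" and k: "k \<in> {n. walk n \<notin> bverts G}" and "j < k"
  have "F (walk k) \<le> F (walk (Suc j))" "F (walk (Suc k)) \<le> F (walk k)"
    using walk_decseq \<open>j < k\<close> by (simp_all add: decseq_def)
  then have "walk j \<notin> {walk k, walk (Suc k)}"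
    using step_edge(4)[of j] j by auto
  moreover have "walk j \<in> {fst (ends G (step_edge j)), snd (ends G (step_edge j))}"
    using step_edge(1)[of j] by (auto simp: incident_def)
  moreover have "walk k \<notin> bverts G" using k by simp
  ultimately show "step_edge j \<noteq> step_edge k"
    using ends_eq_other_end[OF step_edge(1)[of k]] step_edge(3)[of k] by force
qed

lemma step_edge_interior_in_sublevel:
  assumes n: "walk n \<notin> bverts G" and s: "s \<in> {0<..<elen G (step_edge n)}"
  shows "\<iota> (GE (step_edge n) s) \<in> S"
proof -
  let ?e = "step_edge n"
  have "f (\<iota> (gpos G ?e s)) \<le> max (f (\<iota> (gpos G ?e 0))) (f (\<iota> (gpos G ?e (elen G ?e))))"
    using harmonic_le_max[OF graph harm step_edge_edges[of n], of 0 "elen G ?e" s] s by simp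
  also have "\<dots> = max (F (fst (ends G ?e))) (F (snd (ends G ?e)))"
    using metric_graph_elen_pos[OF graph step_edge_edges[of n]] by simp
  also have "\<dots> < level"
  proof -
    have "{fst (ends G ?e), snd (ends G ?e)} = {walk n, walk (Suc n)}"
      using ends_eq_other_end[OF step_edge(1)[of n]] step_edge(3)[OF n] by simp
    then have "fst (ends G ?e) \<in> {walk n, walk (Suc n)}" "snd (ends G ?e) \<in> {walk n, walk (Suc n)}"
      by blast+
    then show ?thesis using walk_below_level[of n] walk_below_level[of "Suc n"] by auto
  qed
  finally have "f (\<iota> (GE ?e s)) \<le> level" using s by (simp add: gpos_interior)
  moreover have "\<iota> (GE ?e s) \<in> M"
    using completion_mem[OF compl] s step_edge_edges by (simp add: gpts_def)
  ultimately show ?thesis using sublevel by blast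
qed

lemma descent_len_le_volume: "ennreal (\<Sum>j<N. seg_len (descent_seg (Suc j))) \<le> volume G \<iota> S"
proof -
  define J where "J = {j. j < N \<and> walk j \<notin> bverts G}"
  have "(\<Sum>j<N. seg_len (descent_seg (Suc j))) = (\<Sum>j\<in>J. elen G (step_edge j))"
    by (rule sum.mono_neutral_cong_right) (auto simp: J_def seg_len_descent_seg_Suc)
  then have "ennreal (\<Sum>j<N. seg_len (descent_seg (Suc j))) = ennreal (\<Sum>j\<in>J. elen G (step_edge j))"
    by simp
  also have "\<dots> = (\<Sum>j\<in>J. ennreal (elen G (step_edge j)))"
    using metric_graph_elen_pos[OF graph step_edge_edges] by (simp add: less_imp_le)
  also have "\<dots> = (\<Sum>e\<in>step_edge ` J. ennreal (elen G e))"
    using inj_on_subset[OF inj_on_step_edge] by (simp add: sum.reindex J_def subset_iff)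
  also have "\<dots> \<le> volume G \<iota> S"
    by (rule volume_ge_sum_elen)
      (use step_edge_interior_in_sublevel metric_graph_elen_pos[OF graph step_edge_edges] in
        \<open>auto simp: J_def step_edge_edges less_imp_le\<close>)
  finally show ?thesis .
qed

lemma summable_descent_seg_len: "summable (\<lambda>n. seg_len (descent_seg n))"
proof -
  have "(\<Sum>j<N. seg_len (descent_seg (Suc j))) \<le> enn2real (volume G \<iota> S)" for N
    using descent_len_le_volume[of N] finite_volume
    by (simp add: ennreal_le_iff[symmetric] del: ennreal_le_iff)
  then have "summable (\<lambda>n. seg_len (descent_seg (Suc n)))"
    by (intro summableI_nonneg_bounded) (simp_all add: seg_len_nonneg)
  then show ?thesis using summable_Suc_iff[of "\<lambda>n. seg_len (descent_seg n)"] by simp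
qed

sublocale segment_chain G \<iota> M descent_seg
  using graph compl descent_seg_edge_seg summable_descent_seg_len seg_len_descent_seg_0
  by unfold_locales (simp_all add: seg_end_descent_seg seg_start_descent_seg_Suc)


lemma descent_seg_ends_below_level:
  "f (\<iota> (seg_start G (descent_seg n))) \<le> level" "f (\<iota> (seg_end G (descent_seg n))) \<le> level"
proof -
  show "f (\<iota> (seg_end G (descent_seg n))) \<le> level"
    using walk_below_level[of n] by (simp add: seg_end_descent_seg)
  show "f (\<iota> (seg_start G (descent_seg n))) \<le> level"
    using walk_below_level s0 by (cases n) (simp_all add: descent_seg_0 seg_start_descent_seg_Suc
      gpos_interior less_imp_le)
qed

lemma chain_path_below_level:
  assumes "s \<in> {0..<total_len}"
  shows "f (\<iota> (chain_path s)) \<le> level"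
  unfolding chain_path_def
  by (rule order_trans[OF harmonic_seg_point_le_max[OF graph harm descent_seg_edge_seg seg_index_arc[OF assms]]])
    (simp add: descent_seg_ends_below_level)

lemma chain_limit_bdry: "chain_limit \<in> bdry G \<iota> M"
proof -
  have "chain_limit \<notin> \<iota> ` gint G"
  proof
    assume "chain_limit \<in> \<iota> ` gint G"
    then obtain y where y: "y \<in> gint G" "chain_limit = \<iota> y" by blast
    have "(\<lambda>n. \<iota> (GV (walk n))) \<longlonglongrightarrow> \<iota> y"
      using LIMSEQ_Suc[OF chain_limit(2)] y(2) by (simp add: seg_start_descent_seg_Suc)
    then have "eventually (\<lambda>n. GV (walk n) = y) sequentially"
      using vertex_seq_tendsto_eventually_eq[OF graph compl _ walk_verts] y(1)
      by (simp add: gint_def)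
    then obtain N where "\<forall>n\<ge>N. GV (walk n) = y" unfolding eventually_sequentially by blast
    then have "GV (walk N) = y" "GV (walk (Suc N)) = y" by simp_all
    moreover have "walk N \<notin> bverts G" using y(1) \<open>GV (walk N) = y\<close> by (auto simp: gint_def)
    ultimately show False using step_edge(4)[of N] by simp
  qed
  then show ?thesis using chain_limit(1) by (simp add: bdry_def)
qed

lemma descent_path:
  "\<exists>\<gamma> L p. graph_path G \<gamma> L \<and> \<gamma> 0 = GE e0 s0 \<and> (\<forall>s\<in>{0..<L}. f (\<iota> (\<gamma> s)) \<le> level) \<and>
     p \<in> bdry G \<iota> M \<and> ((\<lambda>s. \<iota> (\<gamma> s)) \<longlongrightarrow> p) (at_left L)"
proof (intro exI[of _ chain_path] exI[of _ total_len] exI[of _ chain_limit] conjI)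
  show "chain_path 0 = GE e0 s0"
    using s0 by (simp add: chain_path_0 descent_seg_0 gpos_interior)
qed (simp_all add: chain_path_graph_path chain_path_below_level chain_limit_bdry chain_path_tendsto)

end

theorem proposition3p11:
  fixes G :: "('v, 'e) mgraph"
    and \<iota> :: "('v, 'e) gpt \<Rightarrow> 'm::metric_space"
    and M :: "'m set"
    and f :: "'m \<Rightarrow> real"
    and E :: "'m set"
    and C \<epsilon> t :: real
  assumes graph: "metric_graph G"
    and compl: "is_completion G \<iota> M"
    and cpt: "compact M"
    and tdisc: "totally_disconnected (bdry G \<iota> M)"
    and E_clopen: "clopen_in (bdry G \<iota> M) E"
    and E_ne: "E \<noteq> {}"
    and Ec_ne: "bdry G \<iota> M - E \<noteq> {}"
    and harm: "harmonic G \<iota> M f"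
    and C_nonneg: "C \<ge> 0"
    and f_E: "\<forall>x \<in> E. f x = C"
    and f_Ec: "\<forall>x \<in> bdry G \<iota> M - E. f x > C"
    and eps: "\<epsilon> > 0"
    and vol: "volume G \<iota> (nbhd M E \<epsilon>) < \<infinity>"
    and reg: "regular_value G \<iota> M f t"
    and t_lo: "C < t"
    and t_hi: "t < (INF x \<in> bdry G \<iota> M - E. f x)"
    and sub: "{x \<in> M. f x \<le> t} \<subseteq> nbhd M E \<epsilon>"
  shows "\<forall>x \<in> gpts G. f (\<iota> x) = t \<longrightarrow>
           (\<exists>\<gamma> L p. graph_path G \<gamma> L \<and> \<gamma> 0 = x \<and>
              (\<forall>s \<in> {0..<L}. f (\<iota> (\<gamma> s)) \<le> t) \<and>
              p \<in> bdry G \<iota> M \<and> ((\<lambda>s. \<iota> (\<gamma> s)) \<longlongrightarrow> p) (at_left L))"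
proof (intro ballI impI)
  fix x assume x: "x \<in> gpts G" and fx: "f (\<iota> x) = t"
  obtain e0 s0 where x_eq: "x = GE e0 s0" and e0: "e0 \<in> edges G" "0 < s0" "s0 < elen G e0"
    and sloped: "f (\<iota> (GV (fst (ends G e0)))) \<noteq> f (\<iota> (GV (snd (ends G e0))))"
    using regular_level_point_on_sloped_edge[OF graph harm reg x fx] .
  interpret harmonic_descent G \<iota> M f e0 s0 "nbhd M E \<epsilon>"
    using graph compl harm e0 sloped vol sub fx x_eq by unfold_locales auto
  show "\<exists>\<gamma> L p. graph_path G \<gamma> L \<and> \<gamma> 0 = x \<and> (\<forall>s \<in> {0..<L}. f (\<iota> (\<gamma> s)) \<le> t) \<and>
      p \<in> bdry G \<iota> M \<and> ((\<lambda>s. \<iota> (\<gamma> s)) \<longlongrightarrow> p) (at_left L)"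
    using descent_path fx x_eq by simp
qed

end
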